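(* Let $\mathcal F$ be a lattice filter and $P$ an implication filter of an MV-algebra $\mathcal L$. Then $J_u(\mathcal F,P)$ is the smallest lattice filter $\mathcal H$ such that $\mathcal F\subseteq\mathcal H$ and $P\subseteq\mathcal K(\mathcal H)$.
   Context: $\mathcal L=(L,\oplus,\lnot,0)$ is an MV-algebra. We write $x\to y=\lnot x\oplus y$ and use the usual lattice order. A lattice filter is a nonempty upward-closed subset closed under $\wedge$. An implication filter is a subset $P\subseteq L$ containing $1$ such that $x\in P$ and $x\to y\in P$ imply $y\in P$. For an implication filter $P$, let $\sim_P$ be the congruence given by $x\sim_P y$ iff $x\to y\in P$ and $y\to x\in P$. Let $\eta_P\colon\mathcal L\to\mathcal L/P$ be the canonical epimorphism, and for $X\subseteq L$ let $X/P=\eta_P[X]$. Define $J_u(\mathcal F,P)=\eta_P^{-1}[\mathcal F/P]$. The kernel of an upward-closed set $\mathcal H$ is $\mathcal K(\mathcal H)=\{z: \forall a\notin\mathcal H,\ z\to a\notin\mathcal H\}$. *)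

theory Defs
  imports Main
begin

definition mv_algebra :: "'a set \<Rightarrow> ('a \<Rightarrow> 'a \<Rightarrow> 'a) \<Rightarrow> ('a \<Rightarrow> 'a) \<Rightarrow> 'a \<Rightarrow> bool" where
  "mv_algebra L pl ng z \<longleftrightarrow>
     z \<in> L \<and>
     (\<forall>x\<in>L. \<forall>y\<in>L. pl x y \<in> L) \<and>
     (\<forall>x\<in>L. ng x \<in> L) \<and>
     (\<forall>x\<in>L. \<forall>y\<in>L. \<forall>w\<in>L. pl x (pl y w) = pl (pl x y) w) \<and>
     (\<forall>x\<in>L. \<forall>y\<in>L. pl x y = pl y x) \<and>
     (\<forall>x\<in>L. pl x z = x) \<and>
     (\<forall>x\<in>L. ng (ng x) = x) \<and>
     (\<forall>x\<in>L. pl x (ng z) = ng z) \<and>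
     (\<forall>x\<in>L. \<forall>y\<in>L. pl (ng (pl (ng x) y)) y = pl (ng (pl (ng y) x)) x)"

definition mv_one :: "('a \<Rightarrow> 'a) \<Rightarrow> 'a \<Rightarrow> 'a" where
  "mv_one ng z = ng z"

definition mv_imp :: "('a \<Rightarrow> 'a \<Rightarrow> 'a) \<Rightarrow> ('a \<Rightarrow> 'a) \<Rightarrow> 'a \<Rightarrow> 'a \<Rightarrow> 'a" where
  "mv_imp pl ng x y = pl (ng x) y"

definition mv_le :: "('a \<Rightarrow> 'a \<Rightarrow> 'a) \<Rightarrow> ('a \<Rightarrow> 'a) \<Rightarrow> 'a \<Rightarrow> 'a \<Rightarrow> 'a \<Rightarrow> bool" where
  "mv_le pl ng z x y \<longleftrightarrow> mv_imp pl ng x y = mv_one ng z"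

text \<open>x \<and> y = x \<odot> (x \<rightarrow> y), where a \<odot> b = \<not>(\<not>a \<oplus> \<not>b).\<close>
definition mv_meet :: "('a \<Rightarrow> 'a \<Rightarrow> 'a) \<Rightarrow> ('a \<Rightarrow> 'a) \<Rightarrow> 'a \<Rightarrow> 'a \<Rightarrow> 'a" where
  "mv_meet pl ng x y = ng (pl (ng x) (ng (mv_imp pl ng x y)))"

definition lattice_filter :: "'a set \<Rightarrow> ('a \<Rightarrow> 'a \<Rightarrow> 'a) \<Rightarrow> ('a \<Rightarrow> 'a) \<Rightarrow> 'a \<Rightarrow> 'a set \<Rightarrow> bool" where
  "lattice_filter L pl ng z F \<longleftrightarrow>
     F \<subseteq> L \<and> F \<noteq> {} \<and>
     (\<forall>x\<in>F. \<forall>y\<in>L. mv_le pl ng z x y \<longrightarrow> y \<in> F) \<and>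
     (\<forall>x\<in>F. \<forall>y\<in>F. mv_meet pl ng x y \<in> F)"

definition implication_filter :: "'a set \<Rightarrow> ('a \<Rightarrow> 'a \<Rightarrow> 'a) \<Rightarrow> ('a \<Rightarrow> 'a) \<Rightarrow> 'a \<Rightarrow> 'a set \<Rightarrow> bool" where
  "implication_filter L pl ng z P \<longleftrightarrow>
     P \<subseteq> L \<and> mv_one ng z \<in> P \<and>
     (\<forall>x\<in>L. \<forall>y\<in>L. x \<in> P \<longrightarrow> mv_imp pl ng x y \<in> P \<longrightarrow> y \<in> P)"

text \<open>The congruence induced by P and the canonical epimorphism onto L/P
  (elements of L/P are the congruence classes).\<close>
definition filter_cong :: "('a \<Rightarrow> 'a \<Rightarrow> 'a) \<Rightarrow> ('a \<Rightarrow> 'a) \<Rightarrow> 'a set \<Rightarrow> 'a \<Rightarrow> 'a \<Rightarrow> bool" where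
  "filter_cong pl ng P x y \<longleftrightarrow> mv_imp pl ng x y \<in> P \<and> mv_imp pl ng y x \<in> P"

definition eta :: "'a set \<Rightarrow> ('a \<Rightarrow> 'a \<Rightarrow> 'a) \<Rightarrow> ('a \<Rightarrow> 'a) \<Rightarrow> 'a set \<Rightarrow> 'a \<Rightarrow> 'a set" where
  "eta L pl ng P x = {y \<in> L. filter_cong pl ng P x y}"

text \<open>J_u(F,P) = eta_P^{-1}[F/P].\<close>
definition J_u :: "'a set \<Rightarrow> ('a \<Rightarrow> 'a \<Rightarrow> 'a) \<Rightarrow> ('a \<Rightarrow> 'a) \<Rightarrow> 'a set \<Rightarrow> 'a set \<Rightarrow> 'a set" where
  "J_u L pl ng F P = {x \<in> L. eta L pl ng P x \<in> eta L pl ng P ` F}"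

definition kernel :: "'a set \<Rightarrow> ('a \<Rightarrow> 'a \<Rightarrow> 'a) \<Rightarrow> ('a \<Rightarrow> 'a) \<Rightarrow> 'a set \<Rightarrow> 'a set" where
  "kernel L pl ng H = {w \<in> L. \<forall>a\<in>L. a \<notin> H \<longrightarrow> mv_imp pl ng w a \<notin> H}"

end

theory Submission
  imports Defs
begin

(*
  Writing x \<le> y for x \<rightarrow> y = 1, the preimage J_u(F,P) of F/P has the concrete
  description  U(F) = {x. \<exists>f\<in>F. f \<rightarrow> x \<in> P}  ("x lies above F modulo P"), provided F is
  upward closed: if f \<rightarrow> x \<in> P then g = (f \<rightarrow> x) \<rightarrow> x lies above f, hence in F, and is
  congruent to x.  All four claims are then statements about U(F):
    - U(F) is a lattice filter (meets via the strong conjunction of the two witnesses in P),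
    - F \<subseteq> U(F) since f \<rightarrow> f = 1 \<in> P,
    - P \<subseteq> K(U(F)) by exchange and modus ponens,
    - U(F) \<subseteq> H for every such H, since f \<le> (f \<rightarrow> x) \<rightarrow> x.
*)

locale mv =
  fixes L :: "'a set" and pl :: "'a \<Rightarrow> 'a \<Rightarrow> 'a" and ng :: "'a \<Rightarrow> 'a" and z :: 'a
  assumes mv: "mv_algebra L pl ng z"
begin

abbreviation one :: 'a where "one \<equiv> mv_one ng z"
abbreviation imp :: "'a \<Rightarrow> 'a \<Rightarrow> 'a" where "imp \<equiv> mv_imp pl ng"
abbreviation le :: "'a \<Rightarrow> 'a \<Rightarrow> bool" where "le \<equiv> mv_le pl ng z"
abbreviation meet :: "'a \<Rightarrow> 'a \<Rightarrow> 'a" where "meet \<equiv> mv_meet pl ng"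
abbreviation mult :: "'a \<Rightarrow> 'a \<Rightarrow> 'a" where "mult x y \<equiv> ng (pl (ng x) (ng y))"

lemma zero_closed[simp]: "z \<in> L" using mv unfolding mv_algebra_def by blast
lemma plus_closed[simp]: "x \<in> L \<Longrightarrow> y \<in> L \<Longrightarrow> pl x y \<in> L" using mv unfolding mv_algebra_def by blast
lemma neg_closed[simp]: "x \<in> L \<Longrightarrow> ng x \<in> L" using mv unfolding mv_algebra_def by blast
lemma plus_assoc: "x \<in> L \<Longrightarrow> y \<in> L \<Longrightarrow> w \<in> L \<Longrightarrow> pl (pl x y) w = pl x (pl y w)"
  using mv unfolding mv_algebra_def by metis
lemma plus_comm: "x \<in> L \<Longrightarrow> y \<in> L \<Longrightarrow> pl x y = pl y x"
  using mv unfolding mv_algebra_def by metis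
lemma plus_lcomm: "x \<in> L \<Longrightarrow> y \<in> L \<Longrightarrow> w \<in> L \<Longrightarrow> pl x (pl y w) = pl y (pl x w)"
  by (metis plus_assoc plus_comm)
lemmas plus_ac = plus_assoc plus_comm plus_lcomm
lemma plus_zero[simp]: "x \<in> L \<Longrightarrow> pl x z = x" using mv unfolding mv_algebra_def by blast
lemma zero_plus[simp]: "x \<in> L \<Longrightarrow> pl z x = x" by (metis plus_zero plus_comm zero_closed)
lemma neg_neg[simp]: "x \<in> L \<Longrightarrow> ng (ng x) = x" using mv unfolding mv_algebra_def by blast
lemma plus_top[simp]: "x \<in> L \<Longrightarrow> pl x (ng z) = ng z" using mv unfolding mv_algebra_def by blast
lemma top_plus[simp]: "x \<in> L \<Longrightarrow> pl (ng z) x = ng z" by (metis plus_top plus_comm zero_closed neg_closed)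
lemma luk_axiom: "x \<in> L \<Longrightarrow> y \<in> L \<Longrightarrow> pl (ng (pl (ng x) y)) y = pl (ng (pl (ng y) x)) x"
  using mv unfolding mv_algebra_def by blast

text \<open>Excluded middle: \<open>\<not>x \<oplus> x = 1\<close>; it follows from the Lukasiewicz axiom with y = 1.\<close>
lemma neg_plus_self[simp]: "x \<in> L \<Longrightarrow> pl (ng x) x = ng z"
proof -
  assume x: "x \<in> L"
  have "pl (ng (pl (ng x) (ng z))) (ng z) = pl (ng (pl (ng (ng z)) x)) x"
    using x by (intro luk_axiom) auto
  then show ?thesis using x by simp
qed

lemma one_closed[simp]: "one \<in> L" by (simp add: mv_one_def)
lemma imp_closed[simp]: "x \<in> L \<Longrightarrow> y \<in> L \<Longrightarrow> imp x y \<in> L" by (simp add: mv_imp_def)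
lemma meet_closed[simp]: "x \<in> L \<Longrightarrow> y \<in> L \<Longrightarrow> meet x y \<in> L" by (simp add: mv_meet_def mv_imp_def)
lemma le_iff: "le x y \<longleftrightarrow> imp x y = one" by (simp add: mv_le_def)

lemma imp_self[simp]: "x \<in> L \<Longrightarrow> imp x x = one" by (simp add: mv_imp_def mv_one_def)
lemma imp_one[simp]: "x \<in> L \<Longrightarrow> imp x one = one" by (simp add: mv_imp_def mv_one_def)
lemma one_imp[simp]: "x \<in> L \<Longrightarrow> imp one x = x" by (simp add: mv_imp_def mv_one_def)

lemma imp_exchange: "x \<in> L \<Longrightarrow> y \<in> L \<Longrightarrow> w \<in> L \<Longrightarrow> imp x (imp y w) = imp y (imp x w)"
  unfolding mv_imp_def by (simp add: plus_lcomm)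

lemma imp_imp_comm: "x \<in> L \<Longrightarrow> y \<in> L \<Longrightarrow> imp (imp x y) y = imp (imp y x) x"
  unfolding mv_imp_def by (rule luk_axiom)

lemma mult_imp: "x \<in> L \<Longrightarrow> y \<in> L \<Longrightarrow> w \<in> L \<Longrightarrow> imp (mult x y) w = imp x (imp y w)"
  unfolding mv_imp_def by (simp add: plus_assoc)

lemma le_imp_self: "x \<in> L \<Longrightarrow> y \<in> L \<Longrightarrow> imp x (imp y x) = one"
  using imp_exchange[of x y x] by simp

lemma mult_le_left: "x \<in> L \<Longrightarrow> y \<in> L \<Longrightarrow> imp (mult x y) x = one"
  by (simp add: mult_imp imp_exchange[of x y x])

lemma mult_le_right: "x \<in> L \<Longrightarrow> y \<in> L \<Longrightarrow> imp (mult x y) y = one"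
  by (simp add: mult_imp le_imp_self)

lemma suffixing:
  assumes L: "x \<in> L" "y \<in> L" "w \<in> L"
  shows "imp (imp x y) (imp (imp y w) (imp x w)) = one"
proof -
  have "imp (imp x y) (imp (imp y w) (imp x w))
      = pl (pl (ng (pl (ng x) y)) (ng x)) (pl (ng (pl (ng y) w)) w)"
    unfolding mv_imp_def using L by (simp only: neg_neg plus_ac plus_closed neg_closed)
  also have "\<dots> = pl (pl (ng (pl (ng x) y)) (ng x)) (pl (ng (pl (ng w) y)) y)"
    using L luk_axiom[of y w] by simp
  also have "\<dots> = pl (ng (pl (ng w) y)) (pl (ng (pl (ng x) y)) (pl (ng x) y))"
    using L by (simp only: neg_neg plus_ac plus_closed neg_closed)
  also have "\<dots> = one" using L by (simp add: mv_one_def)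
  finally show ?thesis .
qed

lemma le_trans:
  "x \<in> L \<Longrightarrow> y \<in> L \<Longrightarrow> w \<in> L \<Longrightarrow> imp x y = one \<Longrightarrow> imp y w = one \<Longrightarrow> imp x w = one"
  using suffixing[of x y w] by simp

lemma imp_antitone:
  "x \<in> L \<Longrightarrow> y \<in> L \<Longrightarrow> w \<in> L \<Longrightarrow> imp x y = one \<Longrightarrow> imp (imp y w) (imp x w) = one"
  using suffixing[of x y w] by simp

text \<open>If \<open>x \<le> u\<close> then \<open>(u \<rightarrow> x) \<rightarrow> x = u\<close>: the join \<open>u \<or> x\<close> is \<open>u\<close>.\<close>
lemma imp_imp_of_le: "x \<in> L \<Longrightarrow> u \<in> L \<Longrightarrow> imp x u = one \<Longrightarrow> imp (imp u x) x = u"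
  using imp_imp_comm[of u x] by simp

lemma meet_le_left: "x \<in> L \<Longrightarrow> y \<in> L \<Longrightarrow> imp (meet x y) x = one"
  unfolding mv_meet_def by (rule mult_le_left) auto

lemma meet_le_right:
  assumes L: "x \<in> L" "y \<in> L"
  shows "imp (meet x y) y = one"
proof -
  have "imp (meet x y) y = imp x (imp (imp x y) y)"
    unfolding mv_meet_def using L by (simp add: mult_imp)
  also have "\<dots> = imp x (imp (imp y x) x)" using L by (simp add: imp_imp_comm)
  also have "\<dots> = one" using L by (simp add: imp_exchange[of x "imp y x" x])
  finally show ?thesis .
qed

lemma meet_greatest:
  assumes L: "c \<in> L" "x \<in> L" "y \<in> L" and cx: "imp c x = one" and cy: "imp c y = one"
  shows "imp c (meet x y) = one"
proof -
  have hx: "pl (ng c) x = ng z" and hy: "pl (ng c) y = ng z"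
    using cx cy by (simp_all add: mv_imp_def mv_one_def)
  define u where "u = pl x (ng y)"
  define d where "d = ng (pl c (ng y))"
  have uL: "u \<in> L" and dL: "d \<in> L" using L by (auto simp: u_def d_def)
  have S: "pl (ng x) (ng (pl (ng x) y)) = pl (ng u) (ng y)"
  proof -
    have "pl (ng x) (ng (pl (ng x) y)) = pl (ng (pl (ng (ng y)) (ng x))) (ng x)"
      using L by (simp only: neg_neg plus_ac plus_closed neg_closed)
    also have "\<dots> = pl (ng (pl (ng (ng x)) (ng y))) (ng y)"
      using luk_axiom[of "ng y" "ng x"] L by simp
    finally show ?thesis using L by (simp add: u_def)
  qed
  have C: "ng c = pl d (ng y)"
  proof -
    have "pl (ng (pl (ng (ng y)) (ng c))) (ng c) = pl (ng (pl (ng (ng c)) (ng y))) (ng y)"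
      using luk_axiom[of "ng y" "ng c"] L by simp
    moreover have "pl (ng (ng y)) (ng c) = ng z" using hy L by (simp add: plus_comm)
    ultimately show ?thesis using L by (simp add: d_def)
  qed
  have "imp c (meet x y) = pl (ng (pl (ng u) (ng y))) (ng c)"
    unfolding mv_meet_def mv_imp_def S using L uL by (simp only: plus_comm neg_closed plus_closed)
  also have "\<dots> = pl d (pl (ng (pl (ng u) (ng y))) (ng y))"
    using L uL dL by (simp only: C plus_ac plus_closed neg_closed)
  also have "\<dots> = pl d (pl (ng (pl (ng (ng y)) u)) u)"
    using luk_axiom[of u "ng y"] L uL by simp
  also have "\<dots> = pl (ng (pl (ng (ng y)) u)) (pl x (ng c))"
    using L dL by (simp only: C u_def plus_ac plus_closed neg_closed)
  also have "\<dots> = one" using L uL hx by (simp add: plus_comm mv_one_def)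
  finally show ?thesis .
qed

lemma lattice_filter_up:
  "lattice_filter L pl ng z H \<Longrightarrow> x \<in> H \<Longrightarrow> y \<in> L \<Longrightarrow> imp x y = one \<Longrightarrow> y \<in> H"
  unfolding lattice_filter_def le_iff by blast

end

locale mv_implication_filter = mv +
  fixes P :: "'a set"
  assumes impl_filter: "implication_filter L pl ng z P"
begin

lemma P_subset: "P \<subseteq> L" and one_in_P: "one \<in> P"
  and modus_ponens: "x \<in> L \<Longrightarrow> y \<in> L \<Longrightarrow> x \<in> P \<Longrightarrow> imp x y \<in> P \<Longrightarrow> y \<in> P"
  using impl_filter unfolding implication_filter_def by blast+

lemma P_up: "x \<in> P \<Longrightarrow> y \<in> L \<Longrightarrow> imp x y = one \<Longrightarrow> y \<in> P"
  using modus_ponens[of x y] P_subset one_in_P by auto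

lemma P_imp_trans:
  assumes L: "x \<in> L" "y \<in> L" "w \<in> L" and xy: "imp x y \<in> P" and yw: "imp y w \<in> P"
  shows "imp x w \<in> P"
proof -
  have closed: "imp (imp y w) (imp x w) \<in> L" "imp y w \<in> L" "imp x w \<in> L" using L by simp_all
  have "imp (imp y w) (imp x w) \<in> P"
    using P_up[OF xy closed(1) suffixing[OF L]] .
  then show ?thesis using modus_ponens[OF closed(2,3) yw] by blast
qed

lemma P_mult:
  assumes p: "p \<in> P" and q: "q \<in> P"
  shows "mult p q \<in> P"
proof -
  have L: "p \<in> L" "q \<in> L" using p q P_subset by auto
  then have residuation: "imp p (imp q (mult p q)) = one" by (simp add: mult_imp[symmetric])
  have closed: "imp q (mult p q) \<in> L" "mult p q \<in> L" using L by simp_all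
  have "imp q (mult p q) \<in> P" using P_up[OF p closed(1) residuation] .
  then show ?thesis using modus_ponens[OF L(2) closed(2) q] by blast
qed

lemma eta_eq:
  assumes L: "x \<in> L" "y \<in> L" and cong: "filter_cong pl ng P x y"
  shows "eta L pl ng P x = eta L pl ng P y"
  unfolding eta_def filter_cong_def
proof (rule Collect_cong, rule conj_cong[OF refl])
  fix w assume w: "w \<in> L"
  have xy: "imp x y \<in> P" and yx: "imp y x \<in> P" using cong unfolding filter_cong_def by auto
  show "(imp x w \<in> P \<and> imp w x \<in> P) \<longleftrightarrow> (imp y w \<in> P \<and> imp w y \<in> P)"
    using P_imp_trans[OF L(2,1) w yx] P_imp_trans[OF w L _ xy] P_imp_trans[OF L w xy]
      P_imp_trans[OF w L(2,1) _ yx] by blast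
qed

lemma in_own_class: "x \<in> L \<Longrightarrow> x \<in> eta L pl ng P x"
  using one_in_P unfolding eta_def filter_cong_def by simp

definition upset_mod :: "'a set \<Rightarrow> 'a set" where
  "upset_mod F = {x \<in> L. \<exists>f\<in>F. imp f x \<in> P}"

text \<open>For an upward closed F, the preimage of F/P under the canonical epimorphism is
  \<open>upset_mod F\<close>: if \<open>f \<rightarrow> x \<in> P\<close>, then \<open>g = u \<rightarrow> x\<close> with \<open>u = f \<rightarrow> x\<close> lies in F and is
  congruent to x, because \<open>x \<le> g\<close> and \<open>g \<rightarrow> x = u\<close>.\<close>
lemma J_u_eq_upset_mod:
  assumes F: "lattice_filter L pl ng z F"
  shows "J_u L pl ng F P = upset_mod F"
proof
  have FL: "F \<subseteq> L" using F unfolding lattice_filter_def by blast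
  show "J_u L pl ng F P \<subseteq> upset_mod F"
  proof
    fix x assume "x \<in> J_u L pl ng F P"
    then obtain f where x: "x \<in> L" and f: "f \<in> F" and e: "eta L pl ng P x = eta L pl ng P f"
      unfolding J_u_def by auto
    have "x \<in> eta L pl ng P f" using e in_own_class[OF x] by simp
    then show "x \<in> upset_mod F" using f unfolding upset_mod_def eta_def filter_cong_def by auto
  qed
  show "upset_mod F \<subseteq> J_u L pl ng F P"
  proof
    fix x assume "x \<in> upset_mod F"
    then obtain f where x: "x \<in> L" and f: "f \<in> F" and fx: "imp f x \<in> P"
      unfolding upset_mod_def by auto
    have fL: "f \<in> L" using f FL by auto
    define u where "u = imp f x"
    define g where "g = imp u x"
    have uL: "u \<in> L" and gL: "g \<in> L" using x fL by (auto simp: u_def g_def)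
    have x_le_u: "imp x u = one" using x fL by (simp add: u_def imp_exchange[of x f x])
    have g_imp_x: "imp g x = u" using imp_imp_of_le[OF x uL x_le_u] by (simp add: g_def)
    have "imp f g = imp u (imp f x)" unfolding g_def using fL uL x by (rule imp_exchange)
    also have "\<dots> = one" using uL by (simp add: u_def)
    finally have gF: "g \<in> F" by (rule lattice_filter_up[OF F f gL])
    have "imp x g = one" using x uL by (simp add: g_def imp_exchange[of x u x])
    then have "filter_cong pl ng P x g"
      using g_imp_x fx one_in_P unfolding filter_cong_def u_def by simp
    then show "x \<in> J_u L pl ng F P"
      using eta_eq[OF x gL] x gF unfolding J_u_def by auto
  qed
qed

lemma subset_upset_mod: "F \<subseteq> L \<Longrightarrow> F \<subseteq> upset_mod F"
  using one_in_P unfolding upset_mod_def by (auto intro!: bexI)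

text \<open>\<open>upset_mod F\<close> is closed under meets: if \<open>f \<rightarrow> x, g \<rightarrow> y \<in> P\<close> then, with \<open>h = f \<and> g\<close> and
  \<open>p = (f \<rightarrow> x) \<odot> (g \<rightarrow> y) \<in> P\<close>, we get \<open>p \<odot> h \<le> x, y\<close>, hence \<open>p \<le> h \<rightarrow> (x \<and> y)\<close>.\<close>
lemma upset_mod_meet:
  assumes F: "lattice_filter L pl ng z F" and x: "x \<in> upset_mod F" and y: "y \<in> upset_mod F"
  shows "meet x y \<in> upset_mod F"
proof -
  obtain f g where f: "f \<in> F" and fx: "imp f x \<in> P" and g: "g \<in> F" and gy: "imp g y \<in> P"
    and xL: "x \<in> L" and yL: "y \<in> L" using x y unfolding upset_mod_def by auto
  have fL: "f \<in> L" and gL: "g \<in> L" using f g F unfolding lattice_filter_def by auto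
  define h where "h = meet f g"
  define p where "p = mult (imp f x) (imp g y)"
  have hF: "h \<in> F" using F f g unfolding h_def lattice_filter_def by blast
  have hL: "h \<in> L" and pL: "p \<in> L" using fL gL xL yL by (simp_all add: h_def p_def)
  have pP: "p \<in> P" unfolding p_def using P_mult[OF fx gy] .
  have "imp p (imp h x) = one"
  proof (rule le_trans[OF pL _ _ _ imp_antitone])
    show "imp p (imp f x) = one" unfolding p_def using fL gL xL yL by (simp add: mult_le_left)
    show "imp h f = one" unfolding h_def using fL gL by (rule meet_le_left)
  qed (use fL xL hL in auto)
  then have px: "imp (mult p h) x = one" using pL hL xL by (simp add: mult_imp)
  have "imp p (imp h y) = one"
  proof (rule le_trans[OF pL _ _ _ imp_antitone])
    show "imp p (imp g y) = one" unfolding p_def using fL gL xL yL by (simp add: mult_le_right)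
    show "imp h g = one" unfolding h_def using fL gL by (rule meet_le_right)
  qed (use gL yL hL in auto)
  then have py: "imp (mult p h) y = one" using pL hL yL by (simp add: mult_imp)
  have "imp p (imp h (meet x y)) = one"
    using meet_greatest[OF _ xL yL px py] pL hL xL yL by (simp add: mult_imp)
  moreover have "imp h (meet x y) \<in> L" using hL xL yL by simp
  ultimately have "imp h (meet x y) \<in> P" using P_up[OF pP] by blast
  then show ?thesis using hF xL yL unfolding upset_mod_def by auto
qed

lemma upset_mod_lattice_filter:
  assumes F: "lattice_filter L pl ng z F"
  shows "lattice_filter L pl ng z (upset_mod F)"
  unfolding lattice_filter_def le_iff
proof (intro conjI ballI impI)
  have FL: "F \<subseteq> L" and "F \<noteq> {}" using F unfolding lattice_filter_def by auto
  then show "upset_mod F \<noteq> {}" using subset_upset_mod by blast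
  show "upset_mod F \<subseteq> L" unfolding upset_mod_def by auto
next
  fix x y assume x: "x \<in> upset_mod F" and yL: "y \<in> L" and xy: "imp x y = one"
  then obtain f where f: "f \<in> F" and fx: "imp f x \<in> P" and xL: "x \<in> L"
    unfolding upset_mod_def by auto
  have fL: "f \<in> L" using f F unfolding lattice_filter_def by auto
  have "imp f y \<in> P" using P_imp_trans[OF fL xL yL fx] xy one_in_P by simp
  then show "y \<in> upset_mod F" using f yL unfolding upset_mod_def by auto
next
  fix x y assume "x \<in> upset_mod F" "y \<in> upset_mod F"
  then show "meet x y \<in> upset_mod F" by (rule upset_mod_meet[OF F])
qed

lemma P_subset_kernel_upset_mod:
  assumes FL: "F \<subseteq> L"
  shows "P \<subseteq> kernel L pl ng (upset_mod F)"
proof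
  fix w assume w: "w \<in> P"
  have wL: "w \<in> L" using w P_subset by auto
  have "imp w a \<notin> upset_mod F" if aL: "a \<in> L" and a: "a \<notin> upset_mod F" for a
  proof
    assume "imp w a \<in> upset_mod F"
    then obtain f where f: "f \<in> F" and fwa: "imp f (imp w a) \<in> P" unfolding upset_mod_def by auto
    have fL: "f \<in> L" using f FL by auto
    have "imp w (imp f a) \<in> P" using fwa fL wL aL by (simp add: imp_exchange)
    moreover have "imp f a \<in> L" using fL aL by simp
    ultimately have "imp f a \<in> P" using modus_ponens[OF wL _ w] by blast
    then show False using a aL f unfolding upset_mod_def by auto
  qed
  then show "w \<in> kernel L pl ng (upset_mod F)" using wL unfolding kernel_def by auto
qed

text \<open>Minimality: if \<open>f \<rightarrow> x \<in> P \<subseteq> \<K>(H)\<close> and \<open>x \<notin> H\<close> then \<open>(f \<rightarrow> x) \<rightarrow> x \<notin> H\<close>,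
  although it lies above \<open>f \<in> H\<close>.\<close>
lemma upset_mod_least:
  assumes H: "lattice_filter L pl ng z H" and FH: "F \<subseteq> H" and PK: "P \<subseteq> kernel L pl ng H"
  shows "upset_mod F \<subseteq> H"
proof
  fix x assume "x \<in> upset_mod F"
  then obtain f where f: "f \<in> F" and fx: "imp f x \<in> P" and xL: "x \<in> L"
    unfolding upset_mod_def by auto
  have fH: "f \<in> H" using f FH by auto
  have fL: "f \<in> L" using fH H unfolding lattice_filter_def by auto
  have "imp f (imp (imp f x) x) = one"
    using imp_exchange[of f "imp f x" x] fL xL by simp
  moreover have "imp (imp f x) x \<in> L" using fL xL by simp
  ultimately have "imp (imp f x) x \<in> H" using lattice_filter_up[OF H fH] by blast
  moreover have "imp f x \<in> kernel L pl ng H" using fx PK by auto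
  ultimately show "x \<in> H" using xL unfolding kernel_def by auto
qed

end

theorem mainTheorem8:
  assumes "mv_algebra L pl ng z"
    and "lattice_filter L pl ng z F"
    and "implication_filter L pl ng z P"
  shows "lattice_filter L pl ng z (J_u L pl ng F P)
         \<and> F \<subseteq> J_u L pl ng F P
         \<and> P \<subseteq> kernel L pl ng (J_u L pl ng F P)
         \<and> (\<forall>H. lattice_filter L pl ng z H \<and> F \<subseteq> H \<and> P \<subseteq> kernel L pl ng H
                \<longrightarrow> J_u L pl ng F P \<subseteq> H)"
proof -
  interpret mv_implication_filter L pl ng z P
    using assms(1,3) by (rule mv_implication_filter.intro[OF mv.intro mv_implication_filter_axioms.intro])
  have FL: "F \<subseteq> L" using assms(2) unfolding lattice_filter_def by blast
  have J: "J_u L pl ng F P = upset_mod F" using J_u_eq_upset_mod[OF assms(2)] .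
  show ?thesis
    unfolding J
    using upset_mod_lattice_filter[OF assms(2)] subset_upset_mod[OF FL]
      P_subset_kernel_upset_mod[OF FL] upset_mod_least by blast
qed

end
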